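(* The classes $\mathsf{WA}$ and $\mathsf{CT}^{\mathsf{obl}}_{\forall\forall}$ are incomparable with respect to inclusion.
   Context: A tgd is $\alpha(\bar x,\bar y)\rightarrow\exists\bar z\,\beta(\bar x,\bar z)$ with $\bar x$ the variables in both body and head. A position is $(R,i)$ with $1\le i\le\mathrm{arity}(R)$. The dependency graph of a finite tgd set $\Sigma$ has positions as vertices and an edge $(R,i)\to(S,j)$ whenever some tgd of $\Sigma$ has a variable $x\in\bar x$ at $(R,i)$ in its body and either $x$ occurs at $(S,j)$ in its head (universal edge) or an existential variable occurs at $(S,j)$ in its head (existential edge). $\mathsf{WA}$ (weakly acyclic) is the class of $\Sigma$ whose dependency graph has no cycle through an existential edge. Oblivious chase: from an instance (finite set of atoms over constants and nulls), repeatedly fire triggers $(\xi,h)$ with $h(\alpha)\subseteq$ current instance (active or not), each trigger at most once, adding $h'(\beta)$ with fresh nulls for existential variables; infinite sequences are fair. $\mathsf{CT}^{\mathsf{obl}}_{\forall\forall}$ is the class of finite tgd sets for which every oblivious chase sequence from every instance is finite. *)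

theory Defs
  imports Main
begin

type_synonym vatom = "nat \<times> nat list"   (* R(x1,...,xn): relation name, variables *)

datatype tgd = TGD (body: "vatom list") (head: "vatom list")

definition atom_vars :: "vatom list \<Rightarrow> nat set" where
  "atom_vars as = (\<Union>(R, xs) \<in> set as. set xs)"

definition frontier :: "tgd \<Rightarrow> nat set" where
  "frontier \<xi> = atom_vars (body \<xi>) \<inter> atom_vars (head \<xi>)"

definition exvars :: "tgd \<Rightarrow> nat set" where
  "exvars \<xi> = atom_vars (head \<xi>) - atom_vars (body \<xi>)"

definition tgd_set :: "tgd set \<Rightarrow> bool" where
  "tgd_set \<Sigma> \<longleftrightarrow> finite \<Sigma> \<and>
     (\<forall>\<xi>\<in>\<Sigma>. body \<xi> \<noteq> [] \<and> head \<xi> \<noteq> []) \<and>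
     (\<forall>\<xi>\<in>\<Sigma>. \<forall>\<xi>'\<in>\<Sigma>. \<forall>R xs ys.
        (R, xs) \<in> set (body \<xi> @ head \<xi>) \<longrightarrow> (R, ys) \<in> set (body \<xi>' @ head \<xi>') \<longrightarrow>
        length xs = length ys)"

type_synonym position = "nat \<times> nat"   (* (R, i), 1 \<le> i \<le> arity R *)

definition occurs_at :: "nat \<Rightarrow> position \<Rightarrow> vatom list \<Rightarrow> bool" where
  "occurs_at x p as \<longleftrightarrow> (\<exists>xs. (fst p, xs) \<in> set as \<and> 1 \<le> snd p \<and> snd p \<le> length xs
                              \<and> xs ! (snd p - 1) = x)"

definition universal_edges :: "tgd set \<Rightarrow> (position \<times> position) set" where
  "universal_edges \<Sigma> = {(p, q). \<exists>\<xi>\<in>\<Sigma>. \<exists>x\<in>frontier \<xi>.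
       occurs_at x p (body \<xi>) \<and> occurs_at x q (head \<xi>)}"

definition existential_edges :: "tgd set \<Rightarrow> (position \<times> position) set" where
  "existential_edges \<Sigma> = {(p, q). \<exists>\<xi>\<in>\<Sigma>. \<exists>x\<in>frontier \<xi>. \<exists>z\<in>exvars \<xi>.
       occurs_at x p (body \<xi>) \<and> occurs_at z q (head \<xi>)}"

definition dep_graph :: "tgd set \<Rightarrow> (position \<times> position) set" where
  "dep_graph \<Sigma> = universal_edges \<Sigma> \<union> existential_edges \<Sigma>"

definition weakly_acyclic :: "tgd set \<Rightarrow> bool" where
  "weakly_acyclic \<Sigma> \<longleftrightarrow>
     \<not> (\<exists>p q. (p, q) \<in> existential_edges \<Sigma> \<and> (q, p) \<in> (dep_graph \<Sigma>)\<^sup>*)"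

definition WA :: "tgd set set" where
  "WA = {\<Sigma>. tgd_set \<Sigma> \<and> weakly_acyclic \<Sigma>}"

datatype trm = Cst nat | Nul nat

type_synonym atom = "nat \<times> trm list"
type_synonym inst = "atom set"

definition terms_of :: "inst \<Rightarrow> trm set" where
  "terms_of I = (\<Union>(R, ts) \<in> I. set ts)"

text \<open>A trigger is a tgd together with a homomorphism on its body variables
  (a partial map whose domain is exactly the set of body variables).\<close>
type_synonym trigger = "tgd \<times> (nat \<rightharpoonup> trm)"

definition is_trigger :: "tgd set \<Rightarrow> inst \<Rightarrow> trigger \<Rightarrow> bool" where
  "is_trigger \<Sigma> I \<tau> \<longleftrightarrow> (case \<tau> of (\<xi>, h) \<Rightarrow>
     \<xi> \<in> \<Sigma> \<and> dom h = atom_vars (body \<xi>) \<and>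
     (\<forall>(R, xs) \<in> set (body \<xi>). (R, map (\<lambda>x. the (h x)) xs) \<in> I))"

definition fires :: "inst \<Rightarrow> trigger \<Rightarrow> inst \<Rightarrow> bool" where
  "fires I \<tau> J \<longleftrightarrow> (case \<tau> of (\<xi>, h) \<Rightarrow>
     (\<exists>g :: nat \<Rightarrow> trm.
        (\<forall>x \<in> atom_vars (body \<xi>). h x = Some (g x)) \<and>
        inj_on g (exvars \<xi>) \<and>
        (\<forall>z \<in> exvars \<xi>. (\<exists>n. g z = Nul n) \<and> g z \<notin> terms_of I) \<and>
        J = I \<union> (\<lambda>(R, xs). (R, map g xs)) ` set (head \<xi>)))"

definition infinite_obl_chase :: "tgd set \<Rightarrow> inst \<Rightarrow> (nat \<Rightarrow> inst) \<Rightarrow> (nat \<Rightarrow> trigger) \<Rightarrow> bool" where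
  "infinite_obl_chase \<Sigma> I0 I t \<longleftrightarrow>
     I 0 = I0 \<and>
     (\<forall>i. is_trigger \<Sigma> (I i) (t i) \<and> (\<forall>j<i. t j \<noteq> t i) \<and> fires (I i) (t i) (I (Suc i))) \<and>
     (\<forall>i \<tau>. is_trigger \<Sigma> (I i) \<tau> \<longrightarrow> (\<exists>j. t j = \<tau>))"

definition is_instance :: "inst \<Rightarrow> bool" where
  "is_instance I \<longleftrightarrow> finite I"

definition CT_obl_AA :: "tgd set set" where
  "CT_obl_AA = {\<Sigma>. tgd_set \<Sigma> \<and>
     (\<forall>I0. is_instance I0 \<longrightarrow> \<not> (\<exists>I t. infinite_obl_chase \<Sigma> I0 I t))}"

end

theory Submission
  imports Defs
begin

text \<open>The tgd \<open>R(x, y) \<rightarrow> \<exists>z. R(x, z)\<close> is weakly acyclic, since the only existential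
  edge ends in position \<open>(R, 2)\<close>, which has no outgoing edge; yet the oblivious chase
  fires it on every fresh null it creates and so runs forever from \<open>R(a, b)\<close>. Conversely,
  \<open>R(x), S(x) \<rightarrow> \<exists>z. R(z), T(x)\<close> has an existential self-loop on \<open>(R, 1)\<close>, but \<open>S\<close> never
  occurs in a head, so every trigger is determined by one of the finitely many \<open>S\<close>-atoms of
  the initial instance.\<close>

lemma map_eqI_the:
  assumes "dom h = dom h'" and "\<And>x. x \<in> dom h \<Longrightarrow> the (h x) = the (h' x)"
  shows "h = h'"
  using assms by (intro ext option.expand) (auto simp: domIff)

lemma weakly_acyclicI:
  assumes "\<And>p q p'. (p, q) \<in> existential_edges \<Sigma> \<Longrightarrow> (q, p') \<notin> dep_graph \<Sigma>"
  shows "weakly_acyclic \<Sigma>"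
  unfolding weakly_acyclic_def
proof clarify
  fix p q assume pq: "(p, q) \<in> existential_edges \<Sigma>" and qp: "(q, p) \<in> (dep_graph \<Sigma>)\<^sup>*"
  have "(p, q) \<in> dep_graph \<Sigma>"
    using pq by (simp add: dep_graph_def)
  with assms[OF pq] have "q \<noteq> p" by blast
  with qp obtain p' where "(q, p') \<in> dep_graph \<Sigma>"
    by (auto elim: converse_rtranclE)
  with assms[OF pq] show False by blast
qed

lemma infinite_obl_chase_inj:
  assumes "infinite_obl_chase \<Sigma> I0 I t"
  shows "inj t"
proof (rule injI)
  fix i j assume "t i = t j"
  with assms show "i = j"
    unfolding infinite_obl_chase_def by (metis linorder_neqE_nat)
qed

lemma infinite_obl_chase_edb_atom:
  assumes chase: "infinite_obl_chase \<Sigma> I0 I t"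
    and not_in_heads: "\<And>\<xi> xs. \<xi> \<in> \<Sigma> \<Longrightarrow> (R, xs) \<notin> set (head \<xi>)"
    and "(R, ts) \<in> I i"
  shows "(R, ts) \<in> I0"
  using \<open>(R, ts) \<in> I i\<close>
proof (induction i)
  case 0
  with chase show ?case by (simp add: infinite_obl_chase_def)
next
  case (Suc i)
  obtain \<xi> h where t: "t i = (\<xi>, h)" by fastforce
  from chase have "is_trigger \<Sigma> (I i) (t i)" and "fires (I i) (t i) (I (Suc i))"
    by (simp_all add: infinite_obl_chase_def)
  then have "\<xi> \<in> \<Sigma>" and "fires (I i) (\<xi>, h) (I (Suc i))"
    by (simp_all add: t is_trigger_def)
  with not_in_heads have "I (Suc i) \<subseteq> I i \<union> {a. fst a \<noteq> R}"
    by (force simp: fires_def)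
  with Suc show ?case by auto
qed

definition xi_chain :: tgd where
  "xi_chain = TGD [(0, [0, 1])] [(0, [0, 2])]"

lemma atom_vars_xi_chain:
  "atom_vars (body xi_chain) = {0, 1}" "atom_vars (head xi_chain) = {0, 2}"
  by (auto simp: atom_vars_def xi_chain_def)

lemma frontier_exvars_xi_chain: "frontier xi_chain = {0}" "exvars xi_chain = {2}"
  by (auto simp: frontier_def exvars_def atom_vars_xi_chain)

lemma occurs_at_body_xi_chain:
  "occurs_at 0 p (body xi_chain) \<longleftrightarrow> p = (0, 1)"
  by (cases p) (auto simp: occurs_at_def xi_chain_def nth_Cons split: nat.splits)

lemma occurs_at_head_xi_chain:
  "occurs_at 2 p (head xi_chain) \<longleftrightarrow> p = (0, 2)"
  by (cases p) (auto simp: occurs_at_def xi_chain_def nth_Cons split: nat.splits)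

lemma xi_chain_WA: "{xi_chain} \<in> WA"
proof -
  have "tgd_set {xi_chain}" by (auto simp: tgd_set_def xi_chain_def)
  moreover have "weakly_acyclic {xi_chain}"
    by (rule weakly_acyclicI)
      (auto simp: dep_graph_def universal_edges_def existential_edges_def
        frontier_exvars_xi_chain occurs_at_body_xi_chain occurs_at_head_xi_chain)
  ultimately show ?thesis by (simp add: WA_def)
qed

text \<open>The chase from \<open>R(c\<^sub>0, c\<^sub>1)\<close>: stage \<open>i\<close> holds \<open>R(c\<^sub>0, y\<^sub>j)\<close> for \<open>j \<le> i\<close>, where
  \<open>y\<^sub>0 = c\<^sub>1\<close> and \<open>y\<^sub>j\<^sub>+\<^sub>1\<close> is the null created by the \<open>j\<close>-th trigger, which maps \<open>y\<close> to \<open>y\<^sub>j\<close>.\<close>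

fun chain_term :: "nat \<Rightarrow> trm" where
  "chain_term 0 = Cst 1"
| "chain_term (Suc i) = Nul i"

definition chain_inst :: "nat \<Rightarrow> inst" where
  "chain_inst i = (\<lambda>j. (0, [Cst 0, chain_term j])) ` {..i}"

definition chain_hom :: "nat \<Rightarrow> nat \<rightharpoonup> trm" where
  "chain_hom i = [0 \<mapsto> Cst 0, 1 \<mapsto> chain_term i]"

lemma inj_chain_term: "inj chain_term"
proof (rule injI)
  fix i j show "chain_term i = chain_term j \<Longrightarrow> i = j"
    by (cases i; cases j) auto
qed

lemma fresh_null_chain_inst: "Nul i \<notin> terms_of (chain_inst i)"
proof
  assume "Nul i \<in> terms_of (chain_inst i)"
  then obtain j where "j \<le> i" "chain_term j = Nul i"
    by (auto simp: terms_of_def chain_inst_def)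
  then show False by (cases j) auto
qed

lemma is_trigger_xi_chain_iff:
  "is_trigger {xi_chain} (chain_inst i) \<tau> \<longleftrightarrow> (\<exists>j\<le>i. \<tau> = (xi_chain, chain_hom j))"
proof
  assume trig: "is_trigger {xi_chain} (chain_inst i) \<tau>"
  obtain \<xi> h where \<tau>: "\<tau> = (\<xi>, h)" by fastforce
  from trig have \<xi>: "\<xi> = xi_chain" and dom: "dom h = {0, 1}"
    and "(0, [the (h 0), the (h 1)]) \<in> chain_inst i"
    by (auto simp: \<tau> is_trigger_def atom_vars_def xi_chain_def)
  then obtain j where "j \<le> i" "the (h 0) = Cst 0" "the (h 1) = chain_term j"
    by (auto simp: chain_inst_def)
  with dom have "h = chain_hom j"
    by (intro map_eqI_the) (auto simp: chain_hom_def)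
  with \<open>j \<le> i\<close> show "\<exists>j\<le>i. \<tau> = (xi_chain, chain_hom j)" by (auto simp: \<tau> \<xi>)
next
  assume "\<exists>j\<le>i. \<tau> = (xi_chain, chain_hom j)"
  then show "is_trigger {xi_chain} (chain_inst i) \<tau>"
    by (auto simp: is_trigger_def atom_vars_def chain_hom_def chain_inst_def xi_chain_def split: if_splits)
qed

lemma fires_xi_chain:
  "fires (chain_inst i) (xi_chain, chain_hom i) (chain_inst (Suc i))"
  unfolding fires_def prod.case
proof (intro exI conjI)
  let ?g = "\<lambda>v :: nat. if v = 0 then Cst 0 else if v = 1 then chain_term i else Nul i"
  show "\<forall>x\<in>atom_vars (body xi_chain). chain_hom i x = Some (?g x)"
    by (simp add: atom_vars_xi_chain chain_hom_def)
  show "inj_on ?g (exvars xi_chain)"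
    by (simp add: frontier_exvars_xi_chain)
  show "\<forall>z\<in>exvars xi_chain. (\<exists>n. ?g z = Nul n) \<and> ?g z \<notin> terms_of (chain_inst i)"
    using fresh_null_chain_inst by (simp add: frontier_exvars_xi_chain)
  show "chain_inst (Suc i) = chain_inst i \<union> (\<lambda>(R, xs). (R, map ?g xs)) ` set (head xi_chain)"
    by (auto simp: chain_inst_def xi_chain_def atMost_Suc)
qed

lemma infinite_obl_chase_xi_chain:
  "infinite_obl_chase {xi_chain} (chain_inst 0) chain_inst (\<lambda>i. (xi_chain, chain_hom i))"
proof -
  have "inj chain_hom"
    by (rule injI) (metis chain_hom_def fun_upd_same inj_chain_term injD option.inject)
  then show ?thesis
    unfolding infinite_obl_chase_def is_trigger_xi_chain_iff
    by (auto simp: fires_xi_chain dest: injD)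
qed

lemma xi_chain_not_CT_obl_AA: "{xi_chain} \<notin> CT_obl_AA"
  using infinite_obl_chase_xi_chain
  by (auto simp: CT_obl_AA_def is_instance_def chain_inst_def)

definition xi_guarded :: tgd where
  "xi_guarded = TGD [(0, [0]), (1, [0])] [(0, [1]), (2, [0])]"

lemma atom_vars_xi_guarded:
  "atom_vars (body xi_guarded) = {0}" "atom_vars (head xi_guarded) = {0, 1}"
  by (auto simp: atom_vars_def xi_guarded_def)

lemma xi_guarded_not_WA: "{xi_guarded} \<notin> WA"
proof -
  have "0 \<in> frontier xi_guarded" "1 \<in> exvars xi_guarded"
    by (auto simp: frontier_def exvars_def atom_vars_xi_guarded)
  moreover have "occurs_at 0 (0, 1) (body xi_guarded)" "occurs_at 1 (0, 1) (head xi_guarded)"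
    by (auto simp: occurs_at_def xi_guarded_def)
  ultimately have "((0, 1), (0, 1)) \<in> existential_edges {xi_guarded}"
    unfolding existential_edges_def by blast
  then show ?thesis by (auto simp: WA_def weakly_acyclic_def)
qed

lemma xi_guarded_trigger_from_initial:
  assumes chase: "infinite_obl_chase {xi_guarded} I0 I t"
  shows "t i \<in> (\<lambda>c. (xi_guarded, [0 \<mapsto> c])) ` {c. (1, [c]) \<in> I0}"
proof -
  obtain \<xi> h where t: "t i = (\<xi>, h)" by fastforce
  from chase have "is_trigger {xi_guarded} (I i) (\<xi>, h)"
    by (simp add: infinite_obl_chase_def t[symmetric])
  then have \<xi>: "\<xi> = xi_guarded" and dom: "dom h = {0}" and S: "(1, [the (h 0)]) \<in> I i"
    by (auto simp: is_trigger_def atom_vars_def xi_guarded_def)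
  have "(1, [the (h 0)]) \<in> I0"
    by (rule infinite_obl_chase_edb_atom[OF chase _ S])
      (simp add: xi_guarded_def)
  moreover from dom have "h = [0 \<mapsto> the (h 0)]"
    by (intro map_eqI_the) auto
  ultimately show ?thesis by (auto simp: t \<xi>)
qed

lemma xi_guarded_CT_obl_AA: "{xi_guarded} \<in> CT_obl_AA"
proof -
  have "\<not> infinite_obl_chase {xi_guarded} I0 I t" if "finite I0" for I0 I t
  proof
    assume chase: "infinite_obl_chase {xi_guarded} I0 I t"
    have "finite {c. (1::nat, [c]) \<in> I0}"
      using finite_vimageI[OF \<open>finite I0\<close>, of "\<lambda>c. (1, [c])"] by (simp add: inj_def vimage_def)
    then have "finite (range t)"
      using xi_guarded_trigger_from_initial[OF chase] by (blast intro: finite_subset)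
    with infinite_obl_chase_inj[OF chase] show False
      by (simp add: finite_image_iff)
  qed
  moreover have "tgd_set {xi_guarded}" by (auto simp: tgd_set_def xi_guarded_def)
  ultimately show ?thesis by (auto simp: CT_obl_AA_def is_instance_def)
qed

theorem proposition6:
  shows "\<not> (WA \<subseteq> CT_obl_AA) \<and> \<not> (CT_obl_AA \<subseteq> WA)"
  using xi_chain_WA xi_chain_not_CT_obl_AA xi_guarded_CT_obl_AA xi_guarded_not_WA
  by blast

end
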